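(* For all nonnegative integers $n$ and $k$ with $k\le n$, $$W_{m,r}[n,k]_q=\sum_{j=0}^{n-k}(-1)^{j}\,q^{-r-m(k+j)}\,\frac{r_{k+j+1,q}}{r_{k+1,q}}\,W_{m,r}[n+1,k+j+1]_q ,$$ where $r_{i,q}=\prod_{h=1}^{i-1}q^{-r-mh+m}[mh+r]_q$, so that $\frac{r_{k+j+1,q}}{r_{k+1,q}}$ stands for $\prod_{h=k+1}^{k+j}q^{-r-mh+m}[mh+r]_q$ (equal to $1$ when $j=0$).
   Context: Fix a real number $q>0$ with $q\neq 1$, a positive integer $m$ and a complex number $r$. For complex $x$ put $q^x=e^{x\ln q}$ and $[x]_q=\frac{1-q^x}{1-q}$. The numbers $W_{m,r}[n,k]_q$ (a $q$-analogue of the $r$-Whitney numbers of the second kind), for integers $n,k$, are defined by $W_{m,r}[0,0]_q=1$, $W_{m,r}[n,k]_q=0$ whenever $n<k$ or $n<0$ or $k<0$, and, for $n\ge 1$ and $0\le k\le n$, $$W_{m,r}[n,k]_q=q^{m(k-1)+r}\,W_{m,r}[n-1,k-1]_q+[mk+r]_q\,W_{m,r}[n-1,k]_q .$$ *)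

theory Defs
  imports Complex_Main
begin

definition qpow :: "real \<Rightarrow> complex \<Rightarrow> complex" where
  "qpow q x = exp (x * of_real (ln q))"

definition qint :: "real \<Rightarrow> complex \<Rightarrow> complex" where
  "qint q x = (1 - qpow q x) / (1 - of_real q)"

text \<open>q-analogue of the r-Whitney numbers of the second kind, W_{m,r}[n,k]_q, for
  nonnegative n, k (values at negative indices are 0 by definition and enter the
  recursion only as the vanishing term for k = 0).\<close>
fun qW :: "real \<Rightarrow> nat \<Rightarrow> complex \<Rightarrow> nat \<Rightarrow> nat \<Rightarrow> complex" where
  "qW q m r 0 0 = 1"
| "qW q m r 0 (Suc k) = 0"
| "qW q m r (Suc n) 0 = qint q r * qW q m r n 0"
| "qW q m r (Suc n) (Suc k) =
     qpow q (of_nat (m * k) + r) * qW q m r n k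
     + qint q (of_nat (m * Suc k) + r) * qW q m r n (Suc k)"

end

theory Submission
  imports Defs
begin

text \<open>Solving the defining recursion for its first term gives the backward recurrence
  \<open>W[n,k] = q^(-r-mk) (W[n+1,k+1] - [m(k+1)+r] W[n,k+1])\<close> in \<open>k\<close>, which starts from
  \<open>W[n,n+1] = 0\<close>. Unrolling it from \<open>k\<close> up to \<open>n\<close> gives the alternating sum.\<close>

lemma backward_recurrence_unroll:
  fixes x y a c :: "nat \<Rightarrow> 'a::comm_ring_1"
  assumes rec: "\<And>k. k \<le> n \<Longrightarrow> x k = c k * (y (Suc k) - a (Suc k) * x (Suc k))"
    and start: "x (Suc n) = 0"
    and "k \<le> n"
  shows "x k = (\<Sum>j = 0..n - k. (-1) ^ j * c (k + j)
                  * (\<Prod>h = k + 1..k + j. c (h - 1) * a h) * y (k + j + 1))"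
  using \<open>k \<le> n\<close>
proof (induction k rule: inc_induct)
  case base
  show ?case using rec[of n] start by simp
next
  case (step k)
  define g where "g j = (-1) ^ j * c (k + j)
                  * (\<Prod>h = k + 1..k + j. c (h - 1) * a h) * y (k + j + 1)" for j
  define t where "t j = (-1) ^ j * c (Suc k + j)
                  * (\<Prod>h = Suc k + 1..Suc k + j. c (h - 1) * a h) * y (Suc k + j + 1)" for j
  have prod_split: "(\<Prod>h = k + 1..k + Suc j. c (h - 1) * a h)
      = c k * a (Suc k) * (\<Prod>h = Suc k + 1..Suc k + j. c (h - 1) * a h)" for j
    using prod.atLeast_Suc_atMost[of "Suc k" "Suc k + j" "\<lambda>h. c (h - 1) * a h"]
    by (simp add: add_Suc_right del: prod.cl_ivl_Suc)
  have g_Suc: "g (Suc j) = - (c k * a (Suc k)) * t j" for j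
    unfolding g_def t_def prod_split by (simp add: algebra_simps del: prod.cl_ivl_Suc)
  have "n - k = Suc (n - Suc k)" using step.hyps(2) by simp
  then have "(\<Sum>j = 0..n - k. g j) = g 0 + (\<Sum>j = 0..n - Suc k. g (Suc j))"
    by (simp only: sum.atLeast0_atMost_Suc_shift comp_def)
  also have "\<dots> = c k * y (Suc k) - c k * a (Suc k) * (\<Sum>j = 0..n - Suc k. t j)"
    unfolding g_Suc by (simp add: g_def sum_distrib_left sum_negf)
  also have "(\<Sum>j = 0..n - Suc k. t j) = x (Suc k)"
    using step.IH by (simp add: t_def)
  also have "c k * y (Suc k) - c k * a (Suc k) * x (Suc k) = x k"
    using rec[of k] step.hyps(2) by (simp add: right_diff_distrib mult.assoc)
  finally show ?case by (simp add: g_def)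
qed

lemma qpow_neg_mult: "qpow q (- a) * qpow q a = 1"
  by (simp add: qpow_def exp_minus)

lemma qW_eq_0: "n < k \<Longrightarrow> qW q m r n k = 0"
proof (induction n arbitrary: k)
  case 0
  then show ?case by (cases k) auto
next
  case (Suc n)
  then show ?case by (cases k) auto
qed

lemma qW_backward_recurrence:
  "qW q m r n k = qpow q (- r - of_nat (m * k)) *
     (qW q m r (Suc n) (Suc k) - qint q (of_nat (m * Suc k) + r) * qW q m r n (Suc k))"
proof -
  have "qpow q (- r - of_nat (m * k)) * qpow q (of_nat (m * k) + r) = 1"
    using qpow_neg_mult[of q "of_nat (m * k) + r"] by (simp add: algebra_simps)
  then show ?thesis by (simp add: mult.assoc [symmetric])
qed

theorem theorem1:
  fixes q :: real and m :: nat and r :: complex and n k :: nat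
  assumes "q > 0" and "q \<noteq> 1" and "m > 0" and "k \<le> n"
  shows "qW q m r n k =
    (\<Sum>j = 0..n - k. (-1) ^ j * qpow q (- r - of_nat (m * (k + j)))
       * (\<Prod>h = k + 1..k + j. qpow q (- r - of_nat (m * h) + of_nat m)
            * qint q (of_nat (m * h) + r))
       * qW q m r (n + 1) (k + j + 1))"
proof -
  let ?c = "\<lambda>h. qpow q (- r - of_nat (m * h))"
  have shift: "qpow q (- r - of_nat (m * h) + of_nat m) = ?c (h - 1)" if "h \<ge> 1" for h
  proof -
    have "of_nat (m * h) = (of_nat (m * (h - 1)) + of_nat m :: complex)"
      using that by (simp add: of_nat_mult [symmetric] algebra_simps mult_eq_if)
    then show ?thesis by simp
  qed
  have "qW q m r n k = (\<Sum>j = 0..n - k. (-1) ^ j * ?c (k + j)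
       * (\<Prod>h = k + 1..k + j. ?c (h - 1) * qint q (of_nat (m * h) + r))
       * qW q m r (n + 1) (k + j + 1))"
    by (rule backward_recurrence_unroll)
       (use qW_backward_recurrence qW_eq_0 assms(4) in auto)
  also have "\<dots> = (\<Sum>j = 0..n - k. (-1) ^ j * ?c (k + j)
       * (\<Prod>h = k + 1..k + j. qpow q (- r - of_nat (m * h) + of_nat m)
            * qint q (of_nat (m * h) + r))
       * qW q m r (n + 1) (k + j + 1))"
    by (intro sum.cong prod.cong refl arg_cong2[where f = "(*)"]) (rule shift [symmetric]; simp)
  finally show ?thesis .
qed

end
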